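(* Let $d\ge2$ and let $C_1,C_2$ be Archimedean $d$-copulas with strict generators $\phi_1,\phi_2$ that are regularly varying at $0$ with indices $-\alpha_1,-\alpha_2$, where $\alpha_1,\alpha_2\in[0,\infty]$. Then the following are equivalent: (1) $C_1<_{TD}C_2$; (2) $\lambda(C_1)<\lambda(C_2)$; (3) $\alpha_1<\alpha_2$.
   Context: A generator is a continuous, strictly decreasing function $\phi:[0,1]\to[0,\infty]$ with $\phi(1)=0$; it is strict if $\lim_{s\searrow0}\phi(s)=\infty$. A $d$-copula $C$ is Archimedean with strict generator $\phi$ if $C(\boldsymbol u)=\phi^{-1}(\sum_{k=1}^d\phi(u_k))$. $\phi$ is regularly varying at $0$ with index $-\alpha$, $\alpha\in[0,\infty)$, if $\lim_{s\searrow0}\phi(ts)/\phi(s)=t^{-\alpha}$ for all $t>0$; with index $-\infty$ ($\alpha=\infty$) if this limit is $\infty$ for $t\in(0,1)$, $1$ for $t=1$, $0$ for $t>1$. Tail dependence function: $\Lambda(\boldsymbol w;C)=\lim_{s\searrow0}C(s\boldsymbol w)/s$; tail dependence coefficient $\lambda(C)=\Lambda(\boldsymbol 1;C)=\lim_{s\searrow0}C(s,\dots,s)/s$. $C_1<_{TD}C_2$ means $\Lambda(\boldsymbol w;C_1)<\Lambda(\boldsymbol w;C_2)$ for all $\boldsymbol w\in(0,\infty)^d$. *)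

theory Defs
  imports "HOL-Analysis.Analysis"
begin

definition unit_cube :: "(real^'d) set" where
  "unit_cube = {u. \<forall>i. 0 \<le> u$i \<and> u$i \<le> 1}"

definition is_copula :: "(real^'d \<Rightarrow> real) \<Rightarrow> bool" where
  "is_copula C \<longleftrightarrow>
     (\<forall>u\<in>unit_cube. 0 \<le> C u \<and> C u \<le> 1) \<and>
     (\<forall>u\<in>unit_cube. (\<exists>i. u$i = 0) \<longrightarrow> C u = 0) \<and>
     (\<forall>u\<in>unit_cube. \<forall>i. (\<forall>j. j \<noteq> i \<longrightarrow> u$j = 1) \<longrightarrow> C u = u$i) \<and>
     (\<forall>a\<in>unit_cube. \<forall>b\<in>unit_cube. (\<forall>i. a$i \<le> b$i) \<longrightarrow>
        0 \<le> (\<Sum>S\<in>Pow UNIV. (-1) ^ card (UNIV - S) *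
                 C (\<chi> i. if i \<in> S then b$i else a$i)))"

text \<open>Strict generator, represented by its restriction to (0,1]; the value
  phi(0) = infinity is encoded by the limit condition.\<close>
definition strict_generator :: "(real \<Rightarrow> real) \<Rightarrow> bool" where
  "strict_generator \<phi> \<longleftrightarrow>
     continuous_on {0<..1} \<phi> \<and> strict_antimono_on {0<..1} \<phi> \<and> \<phi> 1 = 0 \<and>
     filterlim \<phi> at_top (at_right 0)"

text \<open>Archimedean with strict generator phi: C(u) = phi^{-1}(sum phi(u_k)),
  where phi^{-1}(infinity) = 0, i.e. C(u) = 0 when some u_k = 0.\<close>
definition archimedean_with :: "(real^'d \<Rightarrow> real) \<Rightarrow> (real \<Rightarrow> real) \<Rightarrow> bool" where
  "archimedean_with C \<phi> \<longleftrightarrow>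
     (\<forall>u\<in>unit_cube. C u = (if \<exists>i. u$i = 0 then 0
                             else inv_into {0<..1} \<phi> (\<Sum>i\<in>UNIV. \<phi> (u$i))))"

definition reg_var_zero :: "(real \<Rightarrow> real) \<Rightarrow> ereal \<Rightarrow> bool" where
  "reg_var_zero \<phi> \<alpha> \<longleftrightarrow> 0 \<le> \<alpha> \<and>
     (\<alpha> \<noteq> \<infinity> \<longrightarrow> (\<forall>t>0. ((\<lambda>s. \<phi> (t * s) / \<phi> s) \<longlongrightarrow> t powr (- real_of_ereal \<alpha>)) (at_right 0))) \<and>
     (\<alpha> = \<infinity> \<longrightarrow> (\<forall>t>0.
        (t < 1 \<longrightarrow> filterlim (\<lambda>s. \<phi> (t * s) / \<phi> s) at_top (at_right 0)) \<and>
        (t = 1 \<longrightarrow> ((\<lambda>s. \<phi> (t * s) / \<phi> s) \<longlongrightarrow> 1) (at_right 0)) \<and>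
        (t > 1 \<longrightarrow> ((\<lambda>s. \<phi> (t * s) / \<phi> s) \<longlongrightarrow> 0) (at_right 0))))"

definition tail_dep_fun :: "(real^'d \<Rightarrow> real) \<Rightarrow> real^'d \<Rightarrow> real" where
  "tail_dep_fun C w = Lim (at_right 0) (\<lambda>s. C (s *\<^sub>R w) / s)"

definition tail_dep_coef :: "(real^'d \<Rightarrow> real) \<Rightarrow> real" where
  "tail_dep_coef C = tail_dep_fun C (\<chi> i. 1)"

definition TD_less :: "(real^'d \<Rightarrow> real) \<Rightarrow> (real^'d \<Rightarrow> real) \<Rightarrow> bool" where
  "TD_less C1 C2 \<longleftrightarrow> (\<forall>w. (\<forall>i. 0 < w$i) \<longrightarrow> tail_dep_fun C1 w < tail_dep_fun C2 w)"

end

theory Submission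
  imports Defs
begin

text \<open>Write \<open>\<psi>\<close> for the inverse of the generator \<open>\<phi>\<close>. For small \<open>s\<close> we have
  \<open>C(s w)/s = \<psi>(\<Sum>\<^sub>i \<phi>(s w\<^sub>i))/s\<close>, and \<open>\<psi>(x)/s < t\<close> holds exactly when \<open>\<phi>(t s) < x\<close>.
  By regular variation \<open>\<Sum>\<^sub>i \<phi>(s w\<^sub>i) / \<phi>(t s) \<rightarrow> t\<^sup>\<alpha> \<Sum>\<^sub>i w\<^sub>i\<^sup>-\<^sup>\<alpha>\<close>, so the ratio
  crosses 1 at \<open>t = (\<Sum>\<^sub>i w\<^sub>i\<^sup>-\<^sup>\<alpha>)\<^sup>-\<^sup>1\<^sup>/\<^sup>\<alpha>\<close>, which is therefore \<open>\<Lambda>(w; C)\<close>; the cases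
  \<open>\<alpha> = 0\<close> and \<open>\<alpha> = \<infinity>\<close> give \<open>0\<close> and \<open>min\<^sub>i w\<^sub>i\<close>. For \<open>d \<ge> 2\<close> this negative power mean
  is strictly increasing in \<open>\<alpha>\<close>, at every \<open>w\<close> and in particular at \<open>w = 1\<close>, so all three
  conditions are equivalent to \<open>\<alpha>\<^sub>1 < \<alpha>\<^sub>2\<close>.\<close>

lemma strict_generator_less:
  assumes "strict_generator \<phi>" "0 < x" "x < y" "y \<le> 1"
  shows "\<phi> y < \<phi> x"
  using assms unfolding strict_generator_def monotone_on_def by auto

lemma strict_generator_less_iff:
  assumes "strict_generator \<phi>" "0 < x" "x \<le> 1" "0 < y" "y \<le> 1"
  shows "\<phi> x < \<phi> y \<longleftrightarrow> y < x"
  using strict_generator_less[OF assms(1)] assms(2-) by (metis linorder_neq_iff order.asym)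

lemma strict_generator_nonneg:
  assumes "strict_generator \<phi>" "0 < x" "x \<le> 1"
  shows "0 \<le> \<phi> x"
  using strict_generator_less[OF assms(1,2), of 1] assms
  by (cases "x = 1") (auto simp: strict_generator_def)

lemma strict_generator_pos:
  assumes "strict_generator \<phi>" "0 < x" "x < 1"
  shows "0 < \<phi> x"
  using strict_generator_less[OF assms] assms(1) by (simp add: strict_generator_def)

lemma strict_generator_surj:
  assumes g: "strict_generator \<phi>" and "0 \<le> y"
  shows "y \<in> \<phi> ` {0<..1}"
proof -
  have "eventually (\<lambda>s. y < \<phi> s) (at_right 0)"
    using g by (simp add: strict_generator_def filterlim_at_top_dense)
  then obtain b where "0 < b" and b: "\<And>s. 0 < s \<Longrightarrow> s < b \<Longrightarrow> y < \<phi> s"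
    unfolding eventually_at_right_field by auto
  define a where "a = min (b/2) 1"
  have a: "0 < a" "a < b" "a \<le> 1" using \<open>0 < b\<close> by (auto simp: a_def)
  have "continuous_on {a..1} \<phi>"
    using g a by (auto simp: strict_generator_def intro: continuous_on_subset)
  moreover have "\<phi> 1 \<le> y" "y \<le> \<phi> a"
    using g \<open>0 \<le> y\<close> b[OF a(1,2)] by (auto simp: strict_generator_def)
  ultimately obtain u where "a \<le> u" "u \<le> 1" "\<phi> u = y"
    using IVT2'[of \<phi> 1 y a] a by auto
  then show ?thesis using a by force
qed

lemma inv_generator:
  assumes "strict_generator \<phi>" "0 \<le> y"
  shows "inv_into {0<..1} \<phi> y \<in> {0<..1}" and "\<phi> (inv_into {0<..1} \<phi> y) = y"
  using inv_into_into[OF strict_generator_surj[OF assms]] f_inv_into_f[OF strict_generator_surj[OF assms]]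
  by auto

lemma inv_generator_less_iff:
  assumes g: "strict_generator \<phi>" and "0 \<le> y" "0 < u" "u \<le> 1"
  shows "inv_into {0<..1} \<phi> y < u \<longleftrightarrow> \<phi> u < y"
  using strict_generator_less_iff[OF g, of u "inv_into {0<..1} \<phi> y"] inv_generator[OF g] assms
  by auto

lemma inv_generator_greater_iff:
  assumes g: "strict_generator \<phi>" and "0 \<le> y" "0 < u" "u \<le> 1"
  shows "u < inv_into {0<..1} \<phi> y \<longleftrightarrow> y < \<phi> u"
  using strict_generator_less_iff[OF g, of "inv_into {0<..1} \<phi> y" u] inv_generator[OF g] assms
  by auto

lemma eventually_at_right_0_scaled:
  fixes c :: real
  assumes "0 < c"
  shows "eventually (\<lambda>s. 0 < c * s \<and> c * s < 1) (at_right 0)"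
  unfolding eventually_at_right_field
  by (rule exI[of _ "1/c"]) (use assms in \<open>auto simp: field_simps\<close>)

lemma filterlim_at_right_0_scaled:
  fixes c :: real
  assumes "0 < c"
  shows "filterlim (\<lambda>s. c * s) (at_right 0) (at_right 0)"
proof (rule tendsto_imp_filterlim_at_right)
  show "((\<lambda>s. c * s) \<longlongrightarrow> 0) (at_right 0)"
    by (auto intro!: tendsto_eq_intros)
  show "eventually (\<lambda>s. 0 < c * s) (at_right 0)"
    using eventually_at_right_0_scaled[OF assms] by (auto elim: eventually_mono)
qed

lemma tendsto_inv_generator_div:
  fixes x :: "real \<Rightarrow> real"
  assumes g: "strict_generator \<phi>" and nonneg: "eventually (\<lambda>s. 0 \<le> x s) (at_right 0)"
    and "0 \<le> L"
    and above: "\<And>t. L < t \<Longrightarrow> eventually (\<lambda>s. \<phi> (t * s) < x s) (at_right 0)"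
    and below: "\<And>t. 0 < t \<Longrightarrow> t < L \<Longrightarrow> eventually (\<lambda>s. x s < \<phi> (t * s)) (at_right 0)"
  shows "((\<lambda>s. inv_into {0<..1} \<phi> (x s) / s) \<longlongrightarrow> L) (at_right 0)"
proof (rule order_tendstoI)
  fix t assume "L < t"
  then have "0 < t" using \<open>0 \<le> L\<close> by linarith
  show "eventually (\<lambda>s. inv_into {0<..1} \<phi> (x s) / s < t) (at_right 0)"
    using above[OF \<open>L < t\<close>] nonneg eventually_at_right_0_scaled[OF \<open>0 < t\<close>]
      eventually_at_right_less[of 0]
  proof eventually_elim
    case (elim s)
    then have "inv_into {0<..1} \<phi> (x s) < t * s"
      by (subst inv_generator_less_iff[OF g]) auto
    then show ?case using elim by (simp add: pos_divide_less_eq mult.commute)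
  qed
next
  fix t assume "t < L"
  show "eventually (\<lambda>s. t < inv_into {0<..1} \<phi> (x s) / s) (at_right 0)"
  proof (cases "0 < t")
    case True
    show ?thesis
      using below[OF True \<open>t < L\<close>] nonneg eventually_at_right_0_scaled[OF True]
        eventually_at_right_less[of 0]
    proof eventually_elim
      case (elim s)
      then have "t * s < inv_into {0<..1} \<phi> (x s)"
        by (subst inv_generator_greater_iff[OF g]) auto
      then show ?case using elim by (simp add: pos_less_divide_eq mult.commute)
    qed
  next
    case False
    show ?thesis
      using nonneg eventually_at_right_less[of 0]
    proof eventually_elim
      case (elim s)
      then have "0 < inv_into {0<..1} \<phi> (x s) / s"
        using inv_generator(1)[OF g, of "x s"] by simp
      then show ?case using False by linarith
    qed
  qed
qed

lemma archimedean_with_scaled: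
  fixes C :: "real^'d \<Rightarrow> real"
  assumes "archimedean_with C \<phi>" "\<forall>i. 0 < w$i"
  shows "eventually (\<lambda>s. C (s *\<^sub>R w) = inv_into {0<..1} \<phi> (\<Sum>i\<in>UNIV. \<phi> (s * w$i)))
    (at_right 0)"
proof -
  have "eventually (\<lambda>s. \<forall>i. 0 < w$i * s \<and> w$i * s < 1) (at_right 0)"
    using assms(2) by (intro eventually_all_finite) (simp add: eventually_at_right_0_scaled)
  then show ?thesis
  proof eventually_elim
    case (elim s)
    then have "0 < (s *\<^sub>R w)$i \<and> (s *\<^sub>R w)$i < 1" for i
      by (simp add: mult.commute)
    then have "s *\<^sub>R w \<in> unit_cube" "\<not> (\<exists>i. (s *\<^sub>R w)$i = 0)"
      unfolding unit_cube_def mem_Collect_eq by (meson less_imp_le, metis less_irrefl)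
    then show ?case using assms(1) by (simp add: archimedean_with_def mult.commute)
  qed
qed

lemma eventually_generator_sum_nonneg:
  fixes w :: "'i \<Rightarrow> real"
  assumes g: "strict_generator \<phi>" and "finite I" "\<forall>i\<in>I. 0 < w i"
  shows "eventually (\<lambda>s. 0 \<le> (\<Sum>i\<in>I. \<phi> (s * w i))) (at_right 0)"
proof -
  have "eventually (\<lambda>s. \<forall>i\<in>I. 0 < w i * s \<and> w i * s < 1) (at_right 0)"
    using assms(2,3) by (intro eventually_ball_finite) (auto simp: eventually_at_right_0_scaled)
  then show ?thesis
    by eventually_elim
      (auto intro!: sum_nonneg strict_generator_nonneg[OF g] simp: mult.commute less_imp_le)
qed

lemma eventually_generator_less_sum:
  fixes w :: "'i \<Rightarrow> real"
  assumes g: "strict_generator \<phi>" and "finite I" "j \<in> I" "\<forall>i\<in>I. 0 < w i" "w j < t"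
  shows "eventually (\<lambda>s. \<phi> (t * s) < (\<Sum>i\<in>I. \<phi> (s * w i))) (at_right 0)"
proof -
  have "0 < t" using assms(3-5) by force
  have "eventually (\<lambda>s. \<forall>i\<in>I. 0 < w i * s \<and> w i * s < 1) (at_right 0)"
    using assms(2,4) by (intro eventually_ball_finite) (auto simp: eventually_at_right_0_scaled)
  then show ?thesis
    using eventually_at_right_0_scaled[OF \<open>0 < t\<close>] eventually_at_right_less[of 0]
  proof eventually_elim
    case (elim s)
    then have "\<phi> (t * s) < \<phi> (s * w j)"
      using assms(3,5) by (intro strict_generator_less[OF g]) (auto simp: mult.commute)
    also have "\<dots> \<le> (\<Sum>i\<in>I. \<phi> (s * w i))"
      using elim assms(2,3)
      by (intro member_le_sum strict_generator_nonneg[OF g]) (auto simp: mult.commute less_imp_le)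
    finally show ?case .
  qed
qed

lemma tendsto_generator_sum_ratio:
  fixes \<phi> :: "real \<Rightarrow> real" and w :: "'i \<Rightarrow> real"
  assumes "0 < t" and lim: "\<And>i. i \<in> I \<Longrightarrow> ((\<lambda>s. \<phi> (w i / t * s) / \<phi> s) \<longlongrightarrow> l i) (at_right 0)"
  shows "((\<lambda>s. (\<Sum>i\<in>I. \<phi> (s * w i)) / \<phi> (t * s)) \<longlongrightarrow> (\<Sum>i\<in>I. l i)) (at_right 0)"
proof -
  have "((\<lambda>s. \<Sum>i\<in>I. \<phi> (w i / t * (t * s)) / \<phi> (t * s)) \<longlongrightarrow> (\<Sum>i\<in>I. l i)) (at_right 0)"
    by (intro tendsto_sum filterlim_compose[OF lim filterlim_at_right_0_scaled[OF \<open>0 < t\<close>]])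
  moreover have "w i / t * (t * s) = s * w i" for i s
    using \<open>0 < t\<close> by simp
  ultimately show ?thesis by (simp add: sum_divide_distrib)
qed

lemma generator_cross_of_ratio_tendsto:
  assumes g: "strict_generator \<phi>" and "0 < t"
    and lim: "((\<lambda>s. x s / \<phi> (t * s)) \<longlongrightarrow> R) (at_right 0)"
  shows "1 < R \<Longrightarrow> eventually (\<lambda>s. \<phi> (t * s) < x s) (at_right 0)"
    and "R < 1 \<Longrightarrow> eventually (\<lambda>s. x s < \<phi> (t * s)) (at_right 0)"
proof -
  have pos: "eventually (\<lambda>s. 0 < \<phi> (t * s)) (at_right 0)"
    using eventually_at_right_0_scaled[OF \<open>0 < t\<close>]
    by (auto elim: eventually_mono intro: strict_generator_pos[OF g])
  show "eventually (\<lambda>s. \<phi> (t * s) < x s) (at_right 0)" if "1 < R"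
    using order_tendstoD(1)[OF lim that] pos by eventually_elim (simp add: less_divide_eq)
  show "eventually (\<lambda>s. x s < \<phi> (t * s)) (at_right 0)" if "R < 1"
    using order_tendstoD(2)[OF lim that] pos by eventually_elim (simp add: divide_less_eq)
qed

lemma tendsto_generator_sum_ratio_reg_var:
  fixes w :: "'i \<Rightarrow> real"
  assumes rv: "reg_var_zero \<phi> (ereal a)" and "0 < t" "\<forall>i\<in>I. 0 < w i"
  shows "((\<lambda>s. (\<Sum>i\<in>I. \<phi> (s * w i)) / \<phi> (t * s)) \<longlongrightarrow> t powr a * (\<Sum>i\<in>I. w i powr (- a)))
    (at_right 0)"
proof -
  have rv_lim: "((\<lambda>s. \<phi> (r * s) / \<phi> s) \<longlongrightarrow> r powr (- a)) (at_right 0)" if "0 < r" for r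
    using rv that by (simp add: reg_var_zero_def)
  have "((\<lambda>s. (\<Sum>i\<in>I. \<phi> (s * w i)) / \<phi> (t * s)) \<longlongrightarrow> (\<Sum>i\<in>I. (w i / t) powr (- a))) (at_right 0)"
    using assms(2,3) by (intro tendsto_generator_sum_ratio rv_lim) auto
  moreover have "(w i / t) powr (- a) = t powr a * w i powr (- a)" if "i \<in> I" for i
    using that assms(2,3) by (subst powr_divide) (auto simp: powr_minus field_simps)
  ultimately show ?thesis by (simp add: sum_distrib_left)
qed

lemma neg_root_powr_cross:
  fixes a S t :: real
  assumes "0 < a" "0 < S" "0 < t"
  shows "S powr (-1/a) < t \<longleftrightarrow> 1 < t powr a * S"
    and "t < S powr (-1/a) \<longleftrightarrow> t powr a * S < 1"
proof -
  have "(S powr (-1/a)) powr a = S powr (-1/a * a)"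
    by (rule powr_powr)
  also have "\<dots> = inverse S"
    using assms by (simp add: powr_neg_one inverse_eq_divide)
  finally have root: "(S powr (-1/a)) powr a = inverse S" .
  have "S powr (-1/a) < t \<longleftrightarrow> inverse S < t powr a"
    using powr_less_mono2[of a "S powr (-1/a)" t] powr_less_cancel2[of a "S powr (-1/a)" t]
      assms root by auto
  then show "S powr (-1/a) < t \<longleftrightarrow> 1 < t powr a * S"
    using assms by (simp add: field_simps)
  have "t < S powr (-1/a) \<longleftrightarrow> t powr a < inverse S"
    using powr_less_mono2[of a t "S powr (-1/a)"] powr_less_cancel2[of a t "S powr (-1/a)"]
      assms root by auto
  then show "t < S powr (-1/a) \<longleftrightarrow> t powr a * S < 1"
    using assms by (simp add: field_simps)
qed

definition archimedean_tail_dep :: "ereal \<Rightarrow> real^'d \<Rightarrow> real" where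
  "archimedean_tail_dep \<alpha> w =
     (if \<alpha> = 0 then 0 else if \<alpha> = \<infinity> then Min (range (\<lambda>i. w$i))
      else (\<Sum>i\<in>UNIV. w$i powr (- real_of_ereal \<alpha>)) powr (-1 / real_of_ereal \<alpha>))"

lemma archimedean_tail_dep_nonneg:
  assumes "\<forall>i. 0 < w$i"
  shows "0 \<le> archimedean_tail_dep \<alpha> w"
  using assms by (auto simp: archimedean_tail_dep_def Min_ge_iff less_imp_le)

lemma archimedean_tail_cross_finite:
  fixes w :: "real^'d"
  assumes "CARD('d) \<ge> 2" and g: "strict_generator \<phi>" and rv: "reg_var_zero \<phi> (ereal a)"
    and w: "\<forall>i. 0 < w$i" and "0 < t"
  shows "archimedean_tail_dep (ereal a) w < t \<Longrightarrow>
      eventually (\<lambda>s. \<phi> (t * s) < (\<Sum>i\<in>UNIV. \<phi> (s * w$i))) (at_right 0)"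
    and "t < archimedean_tail_dep (ereal a) w \<Longrightarrow>
      eventually (\<lambda>s. (\<Sum>i\<in>UNIV. \<phi> (s * w$i)) < \<phi> (t * s)) (at_right 0)"
proof -
  define S where "S = (\<Sum>i\<in>UNIV. w$i powr (- a))"
  have "0 < S" unfolding S_def using w by (intro sum_pos) (auto simp: less_imp_neq[symmetric])
  have "\<forall>i\<in>UNIV. 0 < w$i" using w by simp
  note cross = generator_cross_of_ratio_tendsto[OF g \<open>0 < t\<close>
      tendsto_generator_sum_ratio_reg_var[OF rv \<open>0 < t\<close> this, folded S_def]]
  have "0 \<le> a" using rv by (simp add: reg_var_zero_def)
  have tail: "archimedean_tail_dep (ereal a) w = (if a = 0 then 0 else S powr (-1/a))"
    by (simp add: archimedean_tail_dep_def S_def zero_ereal_def)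
  have S_card: "S = CARD('d)" if "a = 0"
  proof -
    have "w$i powr (- a) = 1" for i
      using that w[rule_format, of i] by simp
    then show ?thesis by (simp add: S_def)
  qed
  show "archimedean_tail_dep (ereal a) w < t \<Longrightarrow>
      eventually (\<lambda>s. \<phi> (t * s) < (\<Sum>i\<in>UNIV. \<phi> (s * w$i))) (at_right 0)"
    using cross(1) tail S_card neg_root_powr_cross(1)[of a S t] \<open>0 < S\<close> \<open>0 < t\<close> \<open>0 \<le> a\<close>
      assms(1) by (cases "a = 0") auto
  show "t < archimedean_tail_dep (ereal a) w \<Longrightarrow>
      eventually (\<lambda>s. (\<Sum>i\<in>UNIV. \<phi> (s * w$i)) < \<phi> (t * s)) (at_right 0)"
    using cross(2) tail neg_root_powr_cross(2)[of a S t] \<open>0 < S\<close> \<open>0 < t\<close> \<open>0 \<le> a\<close>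
    by (cases "a = 0") auto
qed

lemma archimedean_tail_cross_infinite:
  fixes w :: "real^'d"
  assumes g: "strict_generator \<phi>" and rv: "reg_var_zero \<phi> \<infinity>"
    and w: "\<forall>i. 0 < w$i" and "0 < t"
  shows "archimedean_tail_dep \<infinity> w < t \<Longrightarrow>
      eventually (\<lambda>s. \<phi> (t * s) < (\<Sum>i\<in>UNIV. \<phi> (s * w$i))) (at_right 0)"
    and "t < archimedean_tail_dep \<infinity> w \<Longrightarrow>
      eventually (\<lambda>s. (\<Sum>i\<in>UNIV. \<phi> (s * w$i)) < \<phi> (t * s)) (at_right 0)"
proof -
  have "\<forall>i\<in>UNIV. 0 < w$i" using w by simp
  show "eventually (\<lambda>s. \<phi> (t * s) < (\<Sum>i\<in>UNIV. \<phi> (s * w$i))) (at_right 0)"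
    if "archimedean_tail_dep \<infinity> w < t"
  proof -
    have "Min (range (\<lambda>i. w$i)) \<in> range (\<lambda>i. w$i)"
      by (rule Min_in) auto
    then obtain j where "w$j = Min (range (\<lambda>i. w$i))"
      by (metis imageE)
    then have "w$j < t" using that by (simp add: archimedean_tail_dep_def)
    then show ?thesis by (rule eventually_generator_less_sum[OF g finite_class.finite_UNIV UNIV_I \<open>\<forall>i\<in>UNIV. _\<close>])
  qed
  show "eventually (\<lambda>s. (\<Sum>i\<in>UNIV. \<phi> (s * w$i)) < \<phi> (t * s)) (at_right 0)"
    if "t < archimedean_tail_dep \<infinity> w"
  proof -
    have "t < w$i" for i
      using that Min_le[of "range (\<lambda>i. w$i)" "w$i"] by (simp add: archimedean_tail_dep_def)
    moreover have lim0: "((\<lambda>s. \<phi> (r * s) / \<phi> s) \<longlongrightarrow> 0) (at_right 0)" if "1 < r" for r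
      using rv that by (simp add: reg_var_zero_def)
    ultimately have ratio0: "((\<lambda>s. \<phi> (w$i / t * s) / \<phi> s) \<longlongrightarrow> 0) (at_right 0)" for i
      using \<open>0 < t\<close> by (intro lim0) simp
    have "((\<lambda>s. (\<Sum>i\<in>UNIV. \<phi> (s * w$i)) / \<phi> (t * s)) \<longlongrightarrow> (\<Sum>i::'d\<in>UNIV. 0)) (at_right 0)"
      by (rule tendsto_generator_sum_ratio[OF \<open>0 < t\<close> ratio0])
    then have "((\<lambda>s. (\<Sum>i\<in>UNIV. \<phi> (s * w$i)) / \<phi> (t * s)) \<longlongrightarrow> 0) (at_right 0)"
      by simp
    then show ?thesis by (rule generator_cross_of_ratio_tendsto(2)[OF g \<open>0 < t\<close>]) simp
  qed
qed

lemma tendsto_archimedean_tail: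
  fixes C :: "real^'d \<Rightarrow> real"
  assumes "CARD('d) \<ge> 2" and g: "strict_generator \<phi>" and arch: "archimedean_with C \<phi>"
    and rv: "reg_var_zero \<phi> \<alpha>" and w: "\<forall>i. 0 < w$i"
  shows "((\<lambda>s. C (s *\<^sub>R w) / s) \<longlongrightarrow> archimedean_tail_dep \<alpha> w) (at_right 0)"
proof -
  have "\<forall>i\<in>UNIV. 0 < w$i" using w by simp
  have lim: "((\<lambda>s. inv_into {0<..1} \<phi> (\<Sum>i\<in>UNIV. \<phi> (s * w$i)) / s) \<longlongrightarrow> archimedean_tail_dep \<alpha> w)
      (at_right 0)"
  proof (rule tendsto_inv_generator_div[OF g])
    show "eventually (\<lambda>s. 0 \<le> (\<Sum>i\<in>UNIV. \<phi> (s * w$i))) (at_right 0)"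
      by (rule eventually_generator_sum_nonneg[OF g finite_class.finite_UNIV \<open>\<forall>i\<in>UNIV. _\<close>])
    show "0 \<le> archimedean_tail_dep \<alpha> w"
      by (rule archimedean_tail_dep_nonneg[OF w])
    have \<alpha>: "\<alpha> = \<infinity> \<or> (\<exists>a. \<alpha> = ereal a)"
      using rv by (cases \<alpha>) (auto simp: reg_var_zero_def)
    show "eventually (\<lambda>s. \<phi> (t * s) < (\<Sum>i\<in>UNIV. \<phi> (s * w$i))) (at_right 0)"
      if "archimedean_tail_dep \<alpha> w < t" for t
    proof -
      have "0 < t" using that archimedean_tail_dep_nonneg[OF w, of \<alpha>] by linarith
      then show ?thesis
        using \<alpha> rv that archimedean_tail_cross_infinite(1)[OF g _ w \<open>0 < t\<close>]
          archimedean_tail_cross_finite(1)[OF assms(1) g _ w \<open>0 < t\<close>] by auto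
    qed
    show "eventually (\<lambda>s. (\<Sum>i\<in>UNIV. \<phi> (s * w$i)) < \<phi> (t * s)) (at_right 0)"
      if "0 < t" "t < archimedean_tail_dep \<alpha> w" for t
      using \<alpha> rv that(2) archimedean_tail_cross_infinite(2)[OF g _ w that(1)]
        archimedean_tail_cross_finite(2)[OF assms(1) g _ w that(1)] by auto
  qed
  have "eventually (\<lambda>s. C (s *\<^sub>R w) / s =
      inv_into {0<..1} \<phi> (\<Sum>i\<in>UNIV. \<phi> (s * w$i)) / s) (at_right 0)"
    using archimedean_with_scaled[OF arch w] by (rule eventually_mono) simp
  then show ?thesis
    using lim by (subst tendsto_cong)
qed

lemma tail_dep_fun_archimedean:
  fixes C :: "real^'d \<Rightarrow> real"
  assumes "CARD('d) \<ge> 2" "strict_generator \<phi>" "archimedean_with C \<phi>" "reg_var_zero \<phi> \<alpha>"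
    "\<forall>i. 0 < w$i"
  shows "tail_dep_fun C w = archimedean_tail_dep \<alpha> w"
  unfolding tail_dep_fun_def
  by (rule tendsto_Lim[OF trivial_limit_at_right_real tendsto_archimedean_tail[OF assms]])

lemma sum_gt_member:
  fixes f :: "'i \<Rightarrow> real"
  assumes "finite I" "2 \<le> card I" "i \<in> I" "\<And>j. j \<in> I \<Longrightarrow> 0 < f j"
  shows "f i < sum f I"
proof -
  have "1 \<le> card (I - {i})" using assms(1-3) by (simp add: card_Diff_singleton)
  then obtain j where "j \<in> I - {i}"
    by (metis card.empty ex_in_conv not_one_le_zero)
  then have "sum f {i} < sum f I"
    using assms by (intro sum_strict_mono2) (auto intro: less_imp_le)
  then show ?thesis by simp
qed

text \<open>With \<open>q\<^sub>i = w\<^sub>i\<^sup>-\<^sup>a / S\<^sub>a \<in> (0,1)\<close>, where \<open>\<Sum>\<^sub>i q\<^sub>i = 1\<close>, and \<open>b/a > 1\<close>: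
  \<open>w\<^sub>i\<^sup>-\<^sup>b = q\<^sub>i\<^sup>b\<^sup>/\<^sup>a S\<^sub>a\<^sup>b\<^sup>/\<^sup>a < q\<^sub>i S\<^sub>a\<^sup>b\<^sup>/\<^sup>a\<close>, hence \<open>S\<^sub>b < S\<^sub>a\<^sup>b\<^sup>/\<^sup>a\<close>.\<close>

lemma neg_power_mean_strict_mono:
  fixes w :: "'i \<Rightarrow> real"
  assumes I: "finite I" "2 \<le> card I" and w: "\<And>i. i \<in> I \<Longrightarrow> 0 < w i" and "0 < a" "a < b"
  shows "(\<Sum>i\<in>I. w i powr (- a)) powr (-1/a) < (\<Sum>i\<in>I. w i powr (- b)) powr (-1/b)"
proof -
  define Sa where "Sa = (\<Sum>i\<in>I. w i powr (- a))"
  define Sb where "Sb = (\<Sum>i\<in>I. w i powr (- b))"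
  define q where "q i = w i powr (- a) / Sa" for i
  have "I \<noteq> {}" using I by auto
  have wpow: "0 < w i powr c" if "i \<in> I" for i c
    using w[OF that] by simp
  have "0 < Sa" "0 < Sb"
    unfolding Sa_def Sb_def using I(1) \<open>I \<noteq> {}\<close> wpow by (auto intro!: sum_pos)
  have q: "0 < q i" "q i < 1" if "i \<in> I" for i
    using sum_gt_member[OF I that wpow] wpow[OF that] \<open>0 < Sa\<close>
    by (simp_all add: q_def Sa_def)
  have "w i powr (- b) < q i * Sa powr (b/a)" if "i \<in> I" for i
  proof -
    have "w i powr (- b) = (q i * Sa) powr (b/a)"
      using \<open>0 < a\<close> \<open>0 < Sa\<close> by (simp add: q_def powr_powr)
    also have "\<dots> = q i powr (b/a) * Sa powr (b/a)"
      using q[OF that] \<open>0 < Sa\<close> by (simp add: powr_mult)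
    also have "\<dots> < q i * Sa powr (b/a)"
      using powr_less_mono'[OF q[OF that], of 1 "b/a"] q[OF that] \<open>0 < a\<close> \<open>a < b\<close> \<open>0 < Sa\<close>
      by simp
    finally show ?thesis .
  qed
  then have "Sb < (\<Sum>i\<in>I. q i) * Sa powr (b/a)"
    unfolding Sb_def sum_distrib_right using I(1) \<open>I \<noteq> {}\<close> by (intro sum_strict_mono) auto
  also have "(\<Sum>i\<in>I. q i) = 1"
    using \<open>0 < Sa\<close> by (simp add: q_def Sa_def sum_divide_distrib[symmetric])
  finally have "(Sa powr (b/a)) powr (-1/b) < Sb powr (-1/b)"
    using \<open>0 < Sb\<close> \<open>0 < a\<close> \<open>a < b\<close> by (intro powr_less_mono2_neg) auto
  then show ?thesis
    using \<open>0 < a\<close> \<open>a < b\<close> by (simp add: Sa_def Sb_def powr_powr)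
qed

lemma neg_power_mean_less_Min:
  fixes w :: "'i \<Rightarrow> real"
  assumes I: "finite I" "2 \<le> card I" and w: "\<And>i. i \<in> I \<Longrightarrow> 0 < w i" and "0 < a"
  shows "(\<Sum>i\<in>I. w i powr (- a)) powr (-1/a) < Min (w ` I)"
proof -
  have "I \<noteq> {}" using I by auto
  then have "Min (w ` I) \<in> w ` I" using I by (intro Min_in) auto
  then obtain j where "j \<in> I" "w j = Min (w ` I)"
    by (metis imageE)
  have wpow: "0 < w i powr c" if "i \<in> I" for i c
    using w[OF that] by simp
  have "(\<Sum>i\<in>I. w i powr (- a)) powr (-1/a) < (w j powr (- a)) powr (-1/a)"
    using sum_gt_member[OF I \<open>j \<in> I\<close> wpow] wpow[OF \<open>j \<in> I\<close>] \<open>0 < a\<close>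
    by (intro powr_less_mono2_neg) auto
  also have "\<dots> = w j"
    using \<open>0 < a\<close> w[OF \<open>j \<in> I\<close>] by (simp add: powr_powr)
  finally show ?thesis using \<open>w j = Min (w ` I)\<close> by simp
qed

lemma archimedean_tail_dep_strict_mono:
  fixes w :: "real^'d"
  assumes card: "CARD('d) \<ge> 2" and w: "\<forall>i. 0 < w$i" and "0 \<le> \<alpha>" "\<alpha> < \<beta>"
  shows "archimedean_tail_dep \<alpha> w < archimedean_tail_dep \<beta> w"
proof -
  have w': "\<And>i. i \<in> UNIV \<Longrightarrow> 0 < w$i" using w by simp
  have "0 < Min (range (\<lambda>i. w$i))"
    using w by (simp add: Min_gr_iff)
  moreover have "0 < (\<Sum>i\<in>UNIV. w$i powr c) powr d" for c d
    using w' by (simp add: sum_pos less_imp_neq[symmetric])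
  moreover have "(\<Sum>i\<in>UNIV. w$i powr (- a)) powr (-1/a) < Min (range (\<lambda>i. w$i))" if "0 < a" for a
    by (rule neg_power_mean_less_Min[OF finite_class.finite_UNIV card w' that])
  moreover have "(\<Sum>i\<in>UNIV. w$i powr (- a)) powr (-1/a) < (\<Sum>i\<in>UNIV. w$i powr (- b)) powr (-1/b)"
    if "0 < a" "a < b" for a b
    by (rule neg_power_mean_strict_mono[OF finite_class.finite_UNIV card w' that])
  ultimately show ?thesis
    using \<open>0 \<le> \<alpha>\<close> \<open>\<alpha> < \<beta>\<close>
    by (cases \<alpha>; cases \<beta>) (auto simp: archimedean_tail_dep_def zero_ereal_def)
qed

lemma archimedean_tail_dep_less_iff:
  fixes w :: "real^'d"
  assumes "CARD('d) \<ge> 2" "\<forall>i. 0 < w$i" "0 \<le> \<alpha>" "0 \<le> \<beta>"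
  shows "archimedean_tail_dep \<alpha> w < archimedean_tail_dep \<beta> w \<longleftrightarrow> \<alpha> < \<beta>"
  using archimedean_tail_dep_strict_mono[OF assms(1,2,3), of \<beta>]
    archimedean_tail_dep_strict_mono[OF assms(1,2,4), of \<alpha>]
  by (metis less_asym linorder_neq_iff)

theorem mainTheorem14:
  fixes C1 C2 :: "real^'d \<Rightarrow> real" and \<phi>1 \<phi>2 :: "real \<Rightarrow> real" and \<alpha>1 \<alpha>2 :: ereal
  assumes "CARD('d) \<ge> 2"
    and "is_copula C1" and "is_copula C2"
    and "strict_generator \<phi>1" and "strict_generator \<phi>2"
    and "archimedean_with C1 \<phi>1" and "archimedean_with C2 \<phi>2"
    and "reg_var_zero \<phi>1 \<alpha>1" and "reg_var_zero \<phi>2 \<alpha>2"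
  shows "(TD_less C1 C2 \<longleftrightarrow> tail_dep_coef C1 < tail_dep_coef C2)
       \<and> (tail_dep_coef C1 < tail_dep_coef C2 \<longleftrightarrow> \<alpha>1 < \<alpha>2)"
proof -
  have "0 \<le> \<alpha>1" "0 \<le> \<alpha>2" using assms(8,9) by (simp_all add: reg_var_zero_def)
  have tail: "tail_dep_fun C1 w < tail_dep_fun C2 w \<longleftrightarrow> \<alpha>1 < \<alpha>2" if "\<forall>i. 0 < w$i" for w
    using tail_dep_fun_archimedean[OF assms(1,4,6,8) that]
      tail_dep_fun_archimedean[OF assms(1,5,7,9) that]
      archimedean_tail_dep_less_iff[OF assms(1) that \<open>0 \<le> \<alpha>1\<close> \<open>0 \<le> \<alpha>2\<close>] by simp
  have coef: "tail_dep_coef C1 < tail_dep_coef C2 \<longleftrightarrow> \<alpha>1 < \<alpha>2"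
    using tail[of "\<chi> i. 1"] by (simp add: tail_dep_coef_def)
  have "TD_less C1 C2 \<longleftrightarrow> \<alpha>1 < \<alpha>2"
    using tail coef unfolding TD_less_def tail_dep_coef_def by (metis vec_lambda_beta zero_less_one)
  with coef show ?thesis by simp
qed

end
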